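(* Let $X\in\mathbb{R}^{n\times p}$, $B^*\in\mathbb{R}^{p\times q}$, $\sigma^*>0$, $E\in\mathbb{R}^{n\times q}$ and $Y=XB^*+E$. Let $\lambda>0$, $0<\sigma_{\min}\le\sigma^*/\sqrt2$, and let $\eta>0$ satisfy $\lambda\|B^*\|_{2,1}\le\eta\sigma^*$. Suppose $E$ lies in the event $$\mathcal A_1=\Big\{\frac{\|X^\top E\|_{2,\infty}}{\sqrt{nq}\|E\|_F}\le\frac\lambda2\Big\}\cap\Big\{\frac{\sigma^*}{\sqrt2}<\frac{\|E\|_F}{\sqrt{nq}}<2\sigma^*\Big\}.$$ Let $(\hat B,\hat\sigma)$ be a minimizer over $B\in\mathbb{R}^{p\times q}$, $\sigma\ge\sigma_{\min}$ of $\frac{1}{2nq\sigma}\|Y-XB\|_F^2+\frac\sigma2+\lambda\|B\|_{2,1}$, and $\hat E=Y-X\hat B$. Then $$\tfrac{1}{\sqrt{nq}}\|\hat E\|_F\le(2+\eta)\sigma^*.$$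
   Context: $\|M\|_{2,1}=\sum_j\|M_{j:}\|_2$ and $\|M\|_{2,\infty}=\max_j\|M_{j:}\|_2$ over rows $M_{j:}$; $\|\cdot\|_F$ is the Frobenius norm. *)

theory Defs
  imports "HOL-Analysis.Analysis"
begin

text \<open>Matrices with n rows and m columns are represented as real^'m^'n;
  row j of M is M $ j, a vector whose norm is the Euclidean 2-norm.\<close>

definition norm21 :: "real^'m^'n \<Rightarrow> real" where
  "norm21 M = (\<Sum>j\<in>UNIV. norm (M $ j))"

definition norm2inf :: "real^'m^'n \<Rightarrow> real" where
  "norm2inf M = Max (range (\<lambda>j. norm (M $ j)))"

definition frob :: "real^'m^'n \<Rightarrow> real" where
  "frob M = sqrt (\<Sum>i\<in>UNIV. \<Sum>j\<in>UNIV. (M $ i $ j)^2)"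

definition sqlasso_obj ::
  "real^'p^'n \<Rightarrow> real^'q^'n \<Rightarrow> real \<Rightarrow> real^'q^'p \<Rightarrow> real \<Rightarrow> real" where
  "sqlasso_obj X Y lam B \<sigma> =
     (frob (Y - X ** B))^2 / (2 * real CARD('n) * real CARD('q) * \<sigma>) + \<sigma> / 2 + lam * norm21 B"

end

theory Submission
  imports Defs
begin

text \<open>Only optimality of \<open>(Bhat, \<sigma>hat)\<close> against the feasible competitor
  \<open>(Bstar, \<sigma>E)\<close> is needed, where \<open>\<sigma>E = \<parallel>E\<parallel>\<^sub>F / sqrt (n q)\<close> is the noise level
  (feasible because \<open>\<sigma>min \<le> \<sigma>star / sqrt 2 < \<sigma>E\<close>). At this point the objective
  equals \<open>\<sigma>E + lam \<parallel>Bstar\<parallel>\<^sub>2\<^sub>,\<^sub>1 < (2 + \<eta>) \<sigma>star\<close>, while by AM-GM the objective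
  at any \<open>(B, \<sigma>)\<close> dominates the residual level \<open>\<parallel>Y - X B\<parallel>\<^sub>F / sqrt (n q)\<close>.\<close>

lemma norm21_nonneg: "norm21 M \<ge> 0"
  unfolding norm21_def by (simp add: sum_nonneg)

lemma le_square_div_add_half:
  fixes a s :: real
  assumes "s > 0"
  shows "a \<le> a\<^sup>2 / (2 * s) + s / 2"
proof -
  have "2 * a * s \<le> a\<^sup>2 + s\<^sup>2"
    using sum_squares_bound[of a s] by (simp add: algebra_simps)
  then show ?thesis
    using assms by (simp add: field_simps power2_eq_square)
qed

lemma sqlasso_obj_at_residual_level:
  fixes X :: "real^'p^'n" and Y :: "real^'q^'n" and B :: "real^'q^'p"
  assumes "\<sigma> > 0" and "frob (Y - X ** B) = \<sigma> * sqrt (real CARD('n) * real CARD('q))"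
  shows "sqlasso_obj X Y lam B \<sigma> = \<sigma> + lam * norm21 B"
  using assms by (simp add: sqlasso_obj_def power_mult_distrib field_simps power2_eq_square)

lemma residual_level_le_sqlasso_obj:
  fixes X :: "real^'p^'n" and Y :: "real^'q^'n" and B :: "real^'q^'p"
  assumes "\<sigma> > 0" and "lam \<ge> 0"
  shows "frob (Y - X ** B) / sqrt (real CARD('n) * real CARD('q)) \<le> sqlasso_obj X Y lam B \<sigma>"
proof -
  define N where "N = real CARD('n) * real CARD('q)"
  have "N > 0"
    unfolding N_def by simp
  have "frob (Y - X ** B) / sqrt N
      \<le> (frob (Y - X ** B) / sqrt N)\<^sup>2 / (2 * \<sigma>) + \<sigma> / 2"
    using le_square_div_add_half assms(1) by blast
  also have "\<dots> = (frob (Y - X ** B))\<^sup>2 / (2 * N * \<sigma>) + \<sigma> / 2"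
    using \<open>N > 0\<close> by (simp add: power_divide mult.assoc)
  also have "\<dots> \<le> sqlasso_obj X Y lam B \<sigma>"
    unfolding sqlasso_obj_def N_def
    using assms(2) norm21_nonneg[of B] by (simp add: mult.assoc)
  finally show ?thesis
    unfolding N_def .
qed

theorem lemma5:
  fixes X :: "real^'p^'n" and Bstar :: "real^'q^'p" and E :: "real^'q^'n"
    and Y :: "real^'q^'n" and Bhat :: "real^'q^'p"
    and \<sigma>star lam \<sigma>min \<eta> \<sigma>hat :: real
  assumes sig_pos: "\<sigma>star > 0"
    and Y_def: "Y = X ** Bstar + E"
    and lam_pos: "lam > 0"
    and smin_pos: "0 < \<sigma>min" and smin_le: "\<sigma>min \<le> \<sigma>star / sqrt 2"
    and eta_pos: "\<eta> > 0" and eta_bound: "lam * norm21 Bstar \<le> \<eta> * \<sigma>star"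
    and A1a: "norm2inf (transpose X ** E) / (sqrt (real CARD('n) * real CARD('q)) * frob E) \<le> lam / 2"
    and A1b: "\<sigma>star / sqrt 2 < frob E / sqrt (real CARD('n) * real CARD('q))"
    and A1c: "frob E / sqrt (real CARD('n) * real CARD('q)) < 2 * \<sigma>star"
    and hat_feas: "\<sigma>hat \<ge> \<sigma>min"
    and hat_min: "\<And>B \<sigma>. \<sigma> \<ge> \<sigma>min \<Longrightarrow>
        sqlasso_obj X Y lam Bhat \<sigma>hat \<le> sqlasso_obj X Y lam B \<sigma>"
  shows "frob (Y - X ** Bhat) / sqrt (real CARD('n) * real CARD('q)) \<le> (2 + \<eta>) * \<sigma>star"
proof -
  define \<sigma>E where "\<sigma>E = frob E / sqrt (real CARD('n) * real CARD('q))"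
  have "\<sigma>star / sqrt 2 > 0"
    using sig_pos by simp
  then have "\<sigma>E > 0" and "\<sigma>E \<ge> \<sigma>min"
    using A1b smin_le unfolding \<sigma>E_def by linarith+
  have "frob (Y - X ** Bstar) = \<sigma>E * sqrt (real CARD('n) * real CARD('q))"
    unfolding \<sigma>E_def Y_def by simp
  then have obj_star: "sqlasso_obj X Y lam Bstar \<sigma>E = \<sigma>E + lam * norm21 Bstar"
    using sqlasso_obj_at_residual_level \<open>\<sigma>E > 0\<close> by blast
  have "frob (Y - X ** Bhat) / sqrt (real CARD('n) * real CARD('q))
      \<le> sqlasso_obj X Y lam Bhat \<sigma>hat"
    using hat_feas smin_pos lam_pos by (intro residual_level_le_sqlasso_obj) simp_all
  also have "\<dots> \<le> sqlasso_obj X Y lam Bstar \<sigma>E"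
    using hat_min \<open>\<sigma>E \<ge> \<sigma>min\<close> .
  also have "\<dots> \<le> (2 + \<eta>) * \<sigma>star"
    using obj_star A1c eta_bound unfolding \<sigma>E_def by (simp add: algebra_simps)
  finally show ?thesis .
qed

end
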